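(* Let $\mathbb{K}$ be any field and $n\geq 3$. Let $S$ be a linear subspace of $\mathrm{A}_n(\mathbb{K})$ in which every matrix has rank at most $2$. For $M\in S$ let $P(M)\in\mathrm{A}_{n-1}(\mathbb{K})$ be the upper-left $(n-1)\times(n-1)$ submatrix of $M$. Assume that $P(S)\subset\mathrm{WA}_{n-1,1,1}(\mathbb{K})$ and $\dim P(S)>1$. Then $S$ is congruent to a subspace of $\mathrm{WA}_{n,1,1}(\mathbb{K})$.
   Context: $\mathrm{A}_p(\mathbb{K})$ denotes the $p\times p$ alternating matrices (skew-symmetric, zero diagonal). $\mathrm{WA}_{p,1,1}(\mathbb{K})$ is the space of $M=(m_{i,j})\in\mathrm{A}_p(\mathbb{K})$ with $m_{i,j}=0$ whenever $i>1$ and $j>1$. Subsets $\mathcal{V},\mathcal{W}$ of $\mathrm{M}_n(\mathbb{K})$ are congruent if $\mathcal{V}=Q\mathcal{W}Q^T$ for some $Q\in\mathrm{GL}_n(\mathbb{K})$. *)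

theory Defs
  imports Jordan_Normal_Form.DL_Rank
begin

text \<open>Matrices are JNF matrices with 0-based indices; index 0 corresponds to the
  paper's index 1.\<close>

definition alt_mat :: "nat \<Rightarrow> 'a::field mat set" where
  "alt_mat p = {M \<in> carrier_mat p p. transpose_mat M = - M \<and> (\<forall>i<p. M $$ (i, i) = 0)}"

definition WA :: "nat \<Rightarrow> 'a::field mat set" where
  "WA p = {M \<in> alt_mat p. \<forall>i<p. \<forall>j<p. 0 < i \<longrightarrow> 0 < j \<longrightarrow> M $$ (i, j) = 0}"

definition upper_left :: "nat \<Rightarrow> 'a::field mat \<Rightarrow> 'a mat" where
  "upper_left n M = mat (n - 1) (n - 1) (\<lambda>(i, j). M $$ (i, j))"

definition congruent_sets :: "nat \<Rightarrow> 'a::field mat set \<Rightarrow> 'a mat set \<Rightarrow> bool" where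
  "congruent_sets n V W \<longleftrightarrow>
     (\<exists>Q \<in> carrier_mat n n. invertible_mat Q \<and> V = (\<lambda>M. Q * M * transpose_mat Q) ` W)"

end

theory Submission
  imports "Jordan_Normal_Form.DL_Rank_Submatrix" Defs
begin

text \<open>Let z = n - 1. Because of the zero block, a matrix M in S is determined by its first row
  a(M) and its last column b(M), indexed by 0 < k < z. Every 3 \<times> 3 minor of M vanishes, and
  two of them are -a_i(M) D and -a_j(M) D with D = a_i(M) b_j(M) - a_j(M) b_i(M); hence a(M) and
  b(M) are proportional. As dim P(S) > 1, the rows a(M) are not all proportional to each other,
  and then linearity forces one ratio: b(M) = l a(M) for all M in S. Adding l times row 0 to row z
  and l times column 0 to column z now clears the entries (k, z) and (z, k), so this congruence
  maps S into WA_{n,1,1}.\<close>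

hide_const (open) Real_Vector_Spaces.subspace

definition proportional_on :: "'b set \<Rightarrow> ('b \<Rightarrow> 'a::field) \<Rightarrow> ('b \<Rightarrow> 'a) \<Rightarrow> bool" where
  "proportional_on I u v \<longleftrightarrow> (\<forall>i\<in>I. \<forall>j\<in>I. u i * v j = u j * v i)"

lemma proportional_on_trans:
  assumes "proportional_on I u w" "proportional_on I v w" "k \<in> I" "w k \<noteq> 0"
  shows "proportional_on I u v"
  unfolding proportional_on_def
proof (intro ballI)
  fix i j assume ij: "i \<in> I" "j \<in> I"
  have w: "u i * w k = u k * w i" "v i * w k = v k * w i" "u j * w k = u k * w j" "v j * w k = v k * w j"
    using assms ij unfolding proportional_on_def by metis+
  have "(u i * v j) * (w k * w k) = (u i * w k) * (v j * w k)" by (simp add: algebra_simps)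
  also have "\<dots> = (u j * w k) * (v i * w k)" using w by (simp add: algebra_simps)
  also have "\<dots> = (u j * v i) * (w k * w k)" by (simp add: algebra_simps)
  finally show "u i * v j = u j * v i" using assms(4) by simp
qed

lemma proportional_on_factor:
  assumes "proportional_on I u v" "k \<in> I" "u k \<noteq> 0"
  shows "\<forall>j\<in>I. v j = (v k / u k) * u j"
  using assms unfolding proportional_on_def
  by (metis nonzero_mult_div_cancel_left times_divide_eq_left mult.commute)

lemma proportional_on_sym: "proportional_on I u v \<Longrightarrow> proportional_on I v u"
  unfolding proportional_on_def by (metis mult.commute)

lemma proportional_on_cong:
  "(\<And>k. k \<in> I \<Longrightarrow> u k = u' k) \<Longrightarrow> (\<And>k. k \<in> I \<Longrightarrow> v k = v' k) \<Longrightarrow>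
    proportional_on I u v \<longleftrightarrow> proportional_on I u' v'"
  unfolding proportional_on_def by simp

lemma proportional_on_sum_same_factor:
  assumes v: "\<forall>k\<in>I. v k = l * u k" and v': "\<forall>k\<in>I. v' k = m * u' k"
    and sum: "proportional_on I (\<lambda>k. u k + u' k) (\<lambda>k. v k + v' k)"
    and indep: "\<not> proportional_on I u u'"
  shows "l = m"
proof -
  obtain i j where ij: "i \<in> I" "j \<in> I" "u i * u' j \<noteq> u j * u' i"
    using indep unfolding proportional_on_def by blast
  have "(u i + u' i) * (l * u j + m * u' j) = (u j + u' j) * (l * u i + m * u' i)"
    using sum v v' ij unfolding proportional_on_def by simp
  then have "(m - l) * (u i * u' j - u j * u' i) = 0" by (simp add: algebra_simps)
  then show ?thesis using ij(3) by simp
qed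

lemma proportional_on_sum_zero:
  assumes u: "\<forall>k\<in>I. u k = 0" and v': "\<forall>k\<in>I. v' k = m * u' k"
    and sum: "proportional_on I (\<lambda>k. u k + u' k) (\<lambda>k. v k + v' k)"
  shows "proportional_on I u' v"
  unfolding proportional_on_def
proof (intro ballI)
  fix i j assume ij: "i \<in> I" "j \<in> I"
  have "u' i * (v j + m * u' j) = u' j * (v i + m * u' i)"
    using sum u v' ij unfolding proportional_on_def by simp
  then show "u' i * v j = u' j * v i" by (simp add: algebra_simps)
qed

text \<open>The ratio b x / a x is pinned down by any y for which a x and a y are not proportional;
  the pair x0, y0 ties all these ratios together.\<close>
lemma proportional_on_common_factor:
  fixes a b :: "'m \<Rightarrow> 'b \<Rightarrow> 'a::field"
  assumes proportional: "\<And>x. x \<in> S \<Longrightarrow> proportional_on I (a x) (b x)"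
    and proportional_sum: "\<And>x y. x \<in> S \<Longrightarrow> y \<in> S \<Longrightarrow>
      proportional_on I (\<lambda>k. a x k + a y k) (\<lambda>k. b x k + b y k)"
    and x0: "x0 \<in> S" and y0: "y0 \<in> S" and indep: "\<not> proportional_on I (a x0) (a y0)"
  shows "\<exists>l. \<forall>x\<in>S. \<forall>k\<in>I. b x k = l * a x k"
proof -
  have factor: "\<exists>l. \<forall>k\<in>I. b x k = l * a x k" if "x \<in> S" "k \<in> I" "a x k \<noteq> 0" for x k
    using proportional_on_factor[OF proportional[OF that(1)] that(2,3)] by blast
  have nonzero: "\<exists>k\<in>I. a x k \<noteq> 0" if "\<not> proportional_on I (a x) u" for x u
    using that unfolding proportional_on_def by (metis mult_zero_left)
  obtain l where l: "\<forall>k\<in>I. b x0 k = l * a x0 k"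
    using nonzero[OF indep] factor[OF x0] by blast
  obtain m where m: "\<forall>k\<in>I. b y0 k = m * a y0 k"
    using nonzero[of y0 "a x0"] indep proportional_on_sym factor[OF y0] by blast
  have "l = m" using proportional_on_sum_same_factor[OF l m proportional_sum[OF x0 y0] indep] .
  show ?thesis
  proof (intro exI ballI)
    fix x k assume x: "x \<in> S" and k: "k \<in> I"
    show "b x k = l * a x k"
    proof (cases "\<forall>j\<in>I. a x j = 0")
      case True
      have "b x k = 0"
        using proportional_on_trans[of I "a x0" "b x" "a y0" k] indep k
          proportional_on_sum_zero[OF True l proportional_sum[OF x x0]]
          proportional_on_sum_zero[OF True m proportional_sum[OF x y0]] by blast
      then show ?thesis using True k by simp
    next
      case False
      then obtain j where j: "j \<in> I" "a x j \<noteq> 0" by blast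
      obtain lx where lx: "\<forall>k\<in>I. b x k = lx * a x k" using factor[OF x j] by blast
      have "\<not> proportional_on I (a x) (a x0) \<or> \<not> proportional_on I (a x) (a y0)"
        using proportional_on_trans[of I "a x0" "a x" "a y0" j] proportional_on_sym j indep by blast
      then show ?thesis
        using proportional_on_sum_same_factor[OF lx l proportional_sum[OF x x0]]
          proportional_on_sum_same_factor[OF lx m proportional_sum[OF x y0]] \<open>l = m\<close> lx k by auto
    qed
  qed
qed

lemma det_mat_1: "det (mat 1 1 f) = (f (0,0) :: 'a::comm_ring_1)"
  by (subst laplace_expansion_row[of _ 1 0]) (auto simp: cofactor_def mat_delete_def)

lemma det_mat_2: "det (mat 2 2 f) = (f (0,0) :: 'a::comm_ring_1) * f (1,1) - f (0,1) * f (1,0)"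
  by (subst laplace_expansion_row[of _ 2 0])
    (auto simp: cofactor_def numeral_2_eq_2 mat_delete_def insert_index_def
      det_mat_1[unfolded One_nat_def] lessThan_Suc)

lemma det_mat_3:
  "det (mat 3 3 f) = (f (0,0) :: 'a::comm_ring_1) * (f (1,1) * f (2,2) - f (1,2) * f (2,1))
     - f (0,1) * (f (1,0) * f (2,2) - f (1,2) * f (2,0))
     + f (0,2) * (f (1,0) * f (2,1) - f (1,1) * f (2,0))"
  apply (subst laplace_expansion_row[of _ 3 0])
  apply (auto simp: cofactor_def numeral_3_eq_3 mat_delete_def insert_index_def lessThan_Suc)
  apply (subst (1 2 3) det_mat_2[unfolded numeral_2_eq_2])
  apply (simp add: numeral_2_eq_2 algebra_simps)
  done

lemma pick_3:
  assumes "r0 < r1" "r1 < (r2::nat)"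
  shows "pick {r0,r1,r2} 0 = r0" "pick {r0,r1,r2} (Suc 0) = r1" "pick {r0,r1,r2} 2 = r2"
proof -
  have pick_rank: "pick {r0,r1,r2} (card {a\<in>{r0,r1,r2}. a < x}) = x" if "x \<in> {r0,r1,r2}" for x
    using that by (rule pick_card_in_set)
  have empty: "{a\<in>{r0,r1,r2}. a < r0} = {}" using assms by auto
  show "pick {r0,r1,r2} 0 = r0" using pick_rank[of r0] unfolding empty by simp
  have "{a\<in>{r0,r1,r2}. a < r1} = {r0}" using assms by auto
  then show "pick {r0,r1,r2} (Suc 0) = r1" using pick_rank[of r1] by simp
  have "{a\<in>{r0,r1,r2}. a < r2} = {r0,r1}" "card {r0,r1} = 2" using assms by auto
  then show "pick {r0,r1,r2} 2 = r2" using pick_rank[of r2] by simp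
qed

lemma card_3_below:
  assumes "r0 < r1" "r1 < (r2::nat)" "r2 < n"
  shows "card {i. i < n \<and> i \<in> {r0,r1,r2}} = 3"
proof -
  have "{i. i < n \<and> i \<in> {r0,r1,r2}} = {r0,r1,r2}" using assms by auto
  then show ?thesis using assms by simp
qed

lemma submatrix_3:
  fixes A :: "'a mat"
  assumes A: "A \<in> carrier_mat n n"
    and r: "r0 < r1" "r1 < r2" "r2 < n" and c: "c0 < c1" "c1 < c2" "c2 < n"
  shows "submatrix A {r0,r1,r2} {c0,c1,c2} = mat 3 3 (\<lambda>(i,j). A $$ ([r0,r1,r2]!i, [c0,c1,c2]!j))"
proof (rule eq_matI)
  fix i j assume "i < dim_row (mat 3 3 (\<lambda>(i,j). A $$ ([r0,r1,r2]!i, [c0,c1,c2]!j)))"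
    "j < dim_col (mat 3 3 (\<lambda>(i,j). A $$ ([r0,r1,r2]!i, [c0,c1,c2]!j)))"
  then have "i = 0 \<or> i = 1 \<or> i = 2" "j = 0 \<or> j = 1 \<or> j = 2" by auto
  then show "submatrix A {r0,r1,r2} {c0,c1,c2} $$ (i,j) =
      mat 3 3 (\<lambda>(i,j). A $$ ([r0,r1,r2]!i, [c0,c1,c2]!j)) $$ (i,j)"
    using A card_3_below[OF r] card_3_below[OF c]
    by (auto simp del: pick.simps simp: submatrix_def pick_3[OF r(1,2)] pick_3[OF c(1,2)])
qed (use A card_3_below[OF r] card_3_below[OF c] in \<open>auto simp: submatrix_def\<close>)

lemma minor_3_eq_0_if_rank_le_2:
  fixes A :: "'a::field mat"
  assumes A: "A \<in> carrier_mat n n" and rank: "vec_space.rank n A \<le> 2"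
    and r: "r0 < r1" "r1 < r2" "r2 < n" and c: "c0 < c1" "c1 < c2" "c2 < n"
  shows "det (mat 3 3 (\<lambda>(i,j). A $$ ([r0,r1,r2]!i, [c0,c1,c2]!j))) = 0"
  using vec_space.rank_gt_minor[OF A, of "{r0,r1,r2}" "{c0,c1,c2}"] rank
  unfolding submatrix_3[OF A r c] card_3_below[OF c] by linarith

lemma alt_mat_carrier: "M \<in> alt_mat n \<Longrightarrow> M \<in> carrier_mat n n"
  unfolding alt_mat_def by blast

lemma alt_mat_skew:
  assumes "M \<in> alt_mat n" "i < n" "j < n"
  shows "M $$ (j,i) = - M $$ (i,j)"
proof -
  have "transpose_mat M $$ (i,j) = (- M) $$ (i,j)" using assms unfolding alt_mat_def by simp
  then show ?thesis using assms alt_mat_carrier by fastforce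
qed

lemma alt_mat_diag: "M \<in> alt_mat n \<Longrightarrow> i < n \<Longrightarrow> M $$ (i,i) = 0"
  unfolding alt_mat_def by blast

lemma alt_mat_rank_le_2_proportional:
  fixes M :: "'a::field mat"
  assumes M: "M \<in> alt_mat n" and rank: "vec_space.rank n M \<le> 2"
    and block: "\<And>i j. 0 < i \<Longrightarrow> i < n - 1 \<Longrightarrow> 0 < j \<Longrightarrow> j < n - 1 \<Longrightarrow> M $$ (i,j) = 0"
  shows "proportional_on {0<..<n-1} (\<lambda>k. M $$ (0,k)) (\<lambda>k. M $$ (k,n-1))"
proof -
  define z where "z = n - 1"
  have sorted_case: "M $$ (0,i) * M $$ (j,z) = M $$ (0,j) * M $$ (i,z)"
    if ij: "0 < i" "i < j" "j < z" for i j
  proof -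
    define D where "D = M $$ (0,i) * M $$ (j,z) - M $$ (0,j) * M $$ (i,z)"
    have n: "0 < n" "z < n" "i < n" "j < n" using ij unfolding z_def by auto
    note minor_eq_0 = minor_3_eq_0_if_rank_le_2[OF alt_mat_carrier[OF M] rank]
    have entries: "M $$ (i,0) = - M $$ (0,i)" "M $$ (j,0) = - M $$ (0,j)"
      "M $$ (z,i) = - M $$ (i,z)" "M $$ (z,j) = - M $$ (j,z)"
      "M $$ (0,0) = 0" "M $$ (i,i) = 0" "M $$ (j,j) = 0" "M $$ (z,z) = 0"
      "M $$ (i,j) = 0" "M $$ (j,i) = 0"
      using alt_mat_skew[OF M, of 0 i] alt_mat_skew[OF M, of 0 j] alt_mat_skew[OF M, of i z]
        alt_mat_skew[OF M, of j z] alt_mat_diag[OF M] block[of i j] block[of j i] ij n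
      unfolding z_def by simp_all
    have "det (mat 3 3 (\<lambda>(r,c). M $$ ([0,i,z]!r, [0,i,j]!c))) = - M $$ (0,i) * D"
      unfolding det_mat_3 by (simp add: numeral_2_eq_2 entries D_def algebra_simps)
    moreover have "det (mat 3 3 (\<lambda>(r,c). M $$ ([0,j,z]!r, [0,i,j]!c))) = - M $$ (0,j) * D"
      unfolding det_mat_3 by (simp add: numeral_2_eq_2 entries D_def algebra_simps)
    ultimately have "M $$ (0,i) * D = 0" "M $$ (0,j) * D = 0"
      using minor_eq_0[of 0 i z 0 i j] minor_eq_0[of 0 j z 0 i j] ij n by auto
    then show ?thesis unfolding D_def by auto
  qed
  show ?thesis
    unfolding proportional_on_def z_def[symmetric]
  proof (intro ballI)
    fix i j assume "i \<in> {0<..<z}" "j \<in> {0<..<z}"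
    then show "M $$ (0,i) * M $$ (j,z) = M $$ (0,j) * M $$ (i,z)"
      using sorted_case[of i j] sorted_case[of j i] by (cases i j rule: linorder_cases) auto
  qed
qed

lemma subspace_mat_closed:
  fixes S :: "'a::field mat set"
  assumes "subspace class_ring S (module_mat TYPE('a) n n)"
  shows "S \<subseteq> carrier_mat n n" "\<And>A B. A \<in> S \<Longrightarrow> B \<in> S \<Longrightarrow> A + B \<in> S"
    "\<And>c A. A \<in> S \<Longrightarrow> c \<cdot>\<^sub>m A \<in> S" "0\<^sub>m n n \<in> S"
proof -
  have S: "LinearCombinations.submodule class_ring S (module_mat TYPE('a) n n)"
    using assms by (simp add: VectorSpace.subspace_def)
  show "S \<subseteq> carrier_mat n n" using LinearCombinations.submodule.subset[OF S]
    by (simp add: module_mat_simps)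
  show "\<And>A B. A \<in> S \<Longrightarrow> B \<in> S \<Longrightarrow> A + B \<in> S"
    using LinearCombinations.submodule.m_closed[OF S] by (simp add: module_mat_simps)
  show "\<And>c A. A \<in> S \<Longrightarrow> c \<cdot>\<^sub>m A \<in> S"
    using LinearCombinations.submodule.smult_closed[OF S] by (simp add: module_mat_simps class_ring_simps)
  show "0\<^sub>m n n \<in> S"
    using LinearCombinations.submodule.zero_closed[OF S] by (simp add: module_mat_simps)
qed

lemma subspace_mat_image:
  fixes f :: "'a::field mat \<Rightarrow> 'a mat"
  assumes S: "subspace class_ring S (module_mat TYPE('a) n n)"
    and carrier: "\<And>A. A \<in> carrier_mat n n \<Longrightarrow> f A \<in> carrier_mat m m"
    and add: "\<And>A B. A \<in> carrier_mat n n \<Longrightarrow> B \<in> carrier_mat n n \<Longrightarrow> f (A + B) = f A + f B"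
    and smult: "\<And>c A. A \<in> carrier_mat n n \<Longrightarrow> f (c \<cdot>\<^sub>m A) = c \<cdot>\<^sub>m f A"
    and zero: "f (0\<^sub>m n n) = 0\<^sub>m m m"
  shows "subspace class_ring (f ` S) (module_mat TYPE('a) m m)"
proof -
  note S_closed = subspace_mat_closed[OF S]
  have vs: "vectorspace class_ring (module_mat TYPE('a) m m)" by (rule matrix_vs)
  then have "Module.module class_ring (module_mat TYPE('a) m m)" by (simp add: vectorspace_def)
  then have "LinearCombinations.submodule class_ring (f ` S) (module_mat TYPE('a) m m)"
  proof (rule LinearCombinations.submodule.intro)
    show "f ` S \<subseteq> carrier (module_mat TYPE('a) m m)"
      using S_closed carrier by (auto simp: module_mat_simps)
    show "v \<oplus>\<^bsub>module_mat TYPE('a) m m\<^esub> w \<in> f ` S" if vw: "v \<in> f ` S" "w \<in> f ` S" for v w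
    proof -
      obtain A B where AB: "A \<in> S" "B \<in> S" "v = f A" "w = f B" using vw by blast
      then have "v \<oplus>\<^bsub>module_mat TYPE('a) m m\<^esub> w = f (A + B)"
        using add[OF subsetD[OF S_closed(1) AB(1)] subsetD[OF S_closed(1) AB(2)]] AB
        by (simp add: module_mat_simps)
      then show ?thesis using S_closed(2) AB by auto
    qed
    show "\<zero>\<^bsub>module_mat TYPE('a) m m\<^esub> \<in> f ` S"
      using S_closed(4) zero by (force simp: module_mat_simps)
    show "c \<odot>\<^bsub>module_mat TYPE('a) m m\<^esub> v \<in> f ` S" if v: "v \<in> f ` S" for c v
    proof -
      obtain A where A: "A \<in> S" "v = f A" using v by blast
      then have "c \<odot>\<^bsub>module_mat TYPE('a) m m\<^esub> v = f (c \<cdot>\<^sub>m A)"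
        using smult[OF subsetD[OF S_closed(1) A(1)]] A by (simp add: module_mat_simps)
      then show ?thesis using S_closed(3) A by auto
    qed
  qed
  then show ?thesis using vs by (simp add: VectorSpace.subspace_def)
qed

lemma dim_le_1_if_multiples:
  fixes W :: "'a::field mat set"
  assumes W: "subspace class_ring W (module_mat TYPE('a) m m)" and v: "v \<in> W"
    and multiple: "\<And>w. w \<in> W \<Longrightarrow> \<exists>t. w = t \<cdot>\<^sub>m v"
  shows "vectorspace.dim class_ring ((module_mat TYPE('a) m m)\<lparr>carrier := W\<rparr>) \<le> 1"
proof -
  let ?V = "(module_mat TYPE('a) m m)\<lparr>carrier := W\<rparr>"
  interpret V: vectorspace class_ring ?V
    by (rule vectorspace.subspace_is_vs[OF matrix_vs W])
  have v_carrier: "{v} \<subseteq> carrier ?V" using v by simp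
  have "W \<subseteq> V.span {v}"
  proof
    fix w assume "w \<in> W"
    then obtain t where t: "w = t \<cdot>\<^sub>m v" using multiple by blast
    have "t \<odot>\<^bsub>?V\<^esub> v \<in> V.span {v}"
      using LinearCombinations.submodule.smult_closed[OF V.span_is_submodule[OF v_carrier]]
        V.in_own_span[OF v_carrier] by (simp add: class_ring_simps)
    then show "w \<in> V.span {v}" using t by (simp add: module_mat_simps)
  qed
  then have "V.span {v} = W" using V.span_is_subset2[OF v_carrier] by simp
  then show ?thesis using V.dim_le1I[of v] v by simp
qed

lemma WA_eq_smult_if_first_row:
  assumes A: "A \<in> WA p" and B: "B \<in> WA p"
    and first_row: "\<And>k. 0 < k \<Longrightarrow> k < p \<Longrightarrow> B $$ (0,k) = t * A $$ (0,k)"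
  shows "B = t \<cdot>\<^sub>m A"
proof (rule eq_matI)
  have alt: "A \<in> alt_mat p" "B \<in> alt_mat p" using A B unfolding WA_def by auto
  fix i j assume "i < dim_row (t \<cdot>\<^sub>m A)" "j < dim_col (t \<cdot>\<^sub>m A)"
  then have ij: "i < p" "j < p" using alt_mat_carrier[OF alt(1)] by auto
  consider "i = 0" "j = 0" | "i = 0" "0 < j" | "0 < i" "j = 0" | "0 < i" "0 < j" by blast
  then show "B $$ (i,j) = (t \<cdot>\<^sub>m A) $$ (i,j)"
  proof cases
    case 1
    then show ?thesis
      using ij alt_mat_diag[OF alt(1), of 0] alt_mat_diag[OF alt(2), of 0] alt_mat_carrier[OF alt(1)]
      by simp
  next
    case 2
    then show ?thesis using ij first_row alt_mat_carrier[OF alt(1)] by simp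
  next
    case 3
    then show ?thesis
      using ij first_row[of i] alt_mat_skew[OF alt(1), of 0 i] alt_mat_skew[OF alt(2), of 0 i]
        alt_mat_carrier[OF alt(1)] by simp
  next
    case 4
    then show ?thesis using ij A B alt_mat_carrier[OF alt(1)] unfolding WA_def by simp
  qed
qed (use A B in \<open>auto simp: WA_def alt_mat_def\<close>)

lemma dim_le_1_if_first_rows_proportional:
  fixes W :: "'a::field mat set"
  assumes W: "subspace class_ring W (module_mat TYPE('a) p p)" and WA: "W \<subseteq> WA p"
    and proportional: "\<And>A B. A \<in> W \<Longrightarrow> B \<in> W \<Longrightarrow>
      proportional_on {0<..<p} (\<lambda>k. A $$ (0,k)) (\<lambda>k. B $$ (0,k))"
  shows "vectorspace.dim class_ring ((module_mat TYPE('a) p p)\<lparr>carrier := W\<rparr>) \<le> 1"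
proof (cases "\<exists>A\<in>W. \<exists>k\<in>{0<..<p}. A $$ (0,k) \<noteq> 0")
  case True
  then obtain A k where A: "A \<in> W" "k \<in> {0<..<p}" "A $$ (0,k) \<noteq> 0" by blast
  show ?thesis
  proof (rule dim_le_1_if_multiples[OF W A(1)])
    fix B assume B: "B \<in> W"
    have "B = (B $$ (0,k) / A $$ (0,k)) \<cdot>\<^sub>m A"
      using proportional_on_factor[OF proportional[OF A(1) B] A(2,3)] A(1) B WA
      by (intro WA_eq_smult_if_first_row) auto
    then show "\<exists>t. B = t \<cdot>\<^sub>m A" ..
  qed
next
  case False
  show ?thesis
  proof (rule dim_le_1_if_multiples[OF W subspace_mat_closed(4)[OF W]])
    fix B assume B: "B \<in> W"
    then have "B = 0 \<cdot>\<^sub>m B" using WA_eq_smult_if_first_row[of B p B 0] False WA by auto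
    also have "\<dots> = 0\<^sub>m p p" using B subspace_mat_closed(1)[OF W] by (intro eq_matI) auto
    also have "\<dots> = 1 \<cdot>\<^sub>m 0\<^sub>m p p" by simp
    finally show "\<exists>t. B = t \<cdot>\<^sub>m 0\<^sub>m p p" ..
  qed
qed

lemma congruence_carrier_mat:
  "Q \<in> carrier_mat n n \<Longrightarrow> M \<in> carrier_mat n n \<Longrightarrow> Q * M * Q\<^sup>T \<in> carrier_mat n n"
  by (metis mult_carrier_mat transpose_carrier_mat)

lemma index_congruence_addrow_mat:
  fixes M :: "'a::comm_ring_1 mat"
  assumes M: "M \<in> carrier_mat n n" and kl: "k < n" "l < n" and ij: "i < n" "j < n"
  shows "(addrow_mat n a k l * M * (addrow_mat n a k l)\<^sup>T) $$ (i,j) =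
    M $$ (i,j) + (if i = k then a * M $$ (l,j) else 0) + (if j = k then a * M $$ (i,l) else 0)
    + (if i = k \<and> j = k then a * a * M $$ (l,l) else 0)"
proof -
  let ?Q = "addrow_mat n a k l"
  have QM: "?Q * M = addrow a k l M" using addrow_mat[OF M kl(2)] by simp
  have "?Q * M \<in> carrier_mat n n" using mult_carrier_mat[OF addrow_mat_carrier M] .
  then have "?Q * M * ?Q\<^sup>T = (?Q * (?Q * M)\<^sup>T)\<^sup>T"
    using transpose_mult[of ?Q n n "(?Q * M)\<^sup>T" n] by simp
  also have "\<dots> = (addrow a k l (addrow a k l M)\<^sup>T)\<^sup>T"
    using addrow_mat[of "(addrow a k l M)\<^sup>T" n n l a k] M kl QM by simp
  finally show ?thesis using M kl ij by (simp add: algebra_simps)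
qed

lemma congruence_addrow_mat_alt_mat:
  fixes M :: "'a::field mat"
  assumes M: "M \<in> alt_mat n" and kl: "k < n" "l < n"
  shows "addrow_mat n a k l * M * (addrow_mat n a k l)\<^sup>T \<in> alt_mat n"
proof -
  define B where "B = addrow_mat n a k l * M * (addrow_mat n a k l)\<^sup>T"
  have Mc: "M \<in> carrier_mat n n" by (rule alt_mat_carrier[OF M])
  have Bc: "B \<in> carrier_mat n n"
    unfolding B_def using congruence_carrier_mat[OF addrow_mat_carrier Mc] .
  note B = index_congruence_addrow_mat[OF Mc kl, of _ _ a, folded B_def]
  have skew: "M $$ (j,i) = - M $$ (i,j)" if "i < n" "j < n" for i j
    using alt_mat_skew[OF M that] .
  have "transpose_mat B = - B"
  proof (rule eq_matI)
    fix i j assume "i < dim_row (- B)" "j < dim_col (- B)"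
    then have ij: "i < n" "j < n" using Bc by auto
    have "B $$ (j,i) = - B $$ (i,j)"
      unfolding B[OF ij] B[OF ij(2,1)]
      using skew[OF ij] skew[OF ij(1) kl(2)] skew[OF ij(2) kl(2)] alt_mat_diag[OF M kl(2)]
      by (auto simp: algebra_simps)
    then show "transpose_mat B $$ (i,j) = (- B) $$ (i,j)" using ij Bc by simp
  qed (use Bc in auto)
  moreover have "B $$ (i,i) = 0" if "i < n" for i
    unfolding B[OF that that] using skew[OF that kl(2)] alt_mat_diag[OF M] that kl
    by (auto simp: algebra_simps)
  ultimately show ?thesis unfolding alt_mat_def B_def[symmetric] using Bc by blast
qed

lemma congruence_addrow_mat_WA:
  fixes M :: "'a::field mat"
  assumes M: "M \<in> alt_mat n" and n: "2 \<le> n"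
    and block: "\<And>i j. 0 < i \<Longrightarrow> i < n - 1 \<Longrightarrow> 0 < j \<Longrightarrow> j < n - 1 \<Longrightarrow> M $$ (i,j) = 0"
    and last_col: "\<And>k. 0 < k \<Longrightarrow> k < n - 1 \<Longrightarrow> M $$ (k,n-1) = l * M $$ (0,k)"
  shows "addrow_mat n l (n-1) 0 * M * (addrow_mat n l (n-1) 0)\<^sup>T \<in> WA n"
proof -
  define z where "z = n - 1"
  define B where "B = addrow_mat n l z 0 * M * (addrow_mat n l z 0)\<^sup>T"
  have z: "0 < z" "z < n" using n unfolding z_def by auto
  have B: "B $$ (i,j) = M $$ (i,j) + (if i = z then l * M $$ (0,j) else 0)
      + (if j = z then l * M $$ (i,0) else 0) + (if i = z \<and> j = z then l * l * M $$ (0,0) else 0)"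
    if "i < n" "j < n" for i j
    unfolding B_def using index_congruence_addrow_mat[OF alt_mat_carrier[OF M] z(2) _ that] z by simp
  have skew: "M $$ (j,i) = - M $$ (i,j)" if "i < n" "j < n" for i j
    using alt_mat_skew[OF M that] .
  have "B \<in> alt_mat n"
    unfolding B_def using congruence_addrow_mat_alt_mat[OF M z(2)] z by simp
  moreover have "B $$ (i,j) = 0" if ij: "0 < i" "0 < j" "i < n" "j < n" for i j
  proof -
    consider "i < z" "j < z" | "i = z" "j < z" | "i < z" "j = z" | "i = z" "j = z"
      using ij unfolding z_def by linarith
    then show ?thesis
    proof cases
      case 1
      then show ?thesis using B[OF ij(3,4)] block ij unfolding z_def by auto
    next
      case 2
      then show ?thesis
        using B[OF ij(3,4)] last_col[of j] skew[of j z] skew[of 0 j] ij z unfolding z_def by auto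
    next
      case 3
      then show ?thesis
        using B[OF ij(3,4)] last_col[of i] skew[of 0 i] ij z unfolding z_def by auto
    next
      case 4
      then show ?thesis
        using B[OF ij(3,4)] skew[of 0 z] alt_mat_diag[OF M] z by (auto simp: algebra_simps)
    qed
  qed
  ultimately show ?thesis unfolding WA_def B_def z_def by blast
qed

lemma subspace_congruence_image:
  fixes Q :: "'a::field mat"
  assumes S: "subspace class_ring S (module_mat TYPE('a) n n)" and Q: "Q \<in> carrier_mat n n"
  shows "subspace class_ring ((\<lambda>M. Q * M * Q\<^sup>T) ` S) (module_mat TYPE('a) n n)"
proof (rule subspace_mat_image[OF S])
  have QT: "Q\<^sup>T \<in> carrier_mat n n" using Q by simp
  show "Q * A * Q\<^sup>T \<in> carrier_mat n n" if "A \<in> carrier_mat n n" for A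
    using congruence_carrier_mat[OF Q that] .
  show "Q * (A + B) * Q\<^sup>T = Q * A * Q\<^sup>T + Q * B * Q\<^sup>T"
    if "A \<in> carrier_mat n n" "B \<in> carrier_mat n n" for A B
    using that Q QT by (simp add: mult_add_distrib_mat add_mult_distrib_mat[of _ n n])
  show "Q * (c \<cdot>\<^sub>m A) * Q\<^sup>T = c \<cdot>\<^sub>m (Q * A * Q\<^sup>T)" if "A \<in> carrier_mat n n" for c A
    using that Q QT by (simp add: mult_smult_distrib mult_smult_assoc_mat[of _ n n])
  show "Q * 0\<^sub>m n n * Q\<^sup>T = 0\<^sub>m n n" using Q by simp
qed

lemma congruent_sets_congruence_image:
  fixes P Q :: "'a::field mat"
  assumes S: "S \<subseteq> carrier_mat n n" and P: "P \<in> carrier_mat n n" and Q: "Q \<in> carrier_mat n n"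
    and PQ: "P * Q = 1\<^sub>m n" and QP: "Q * P = 1\<^sub>m n"
  shows "congruent_sets n S ((\<lambda>M. Q * M * Q\<^sup>T) ` S)"
  unfolding congruent_sets_def
proof (intro bexI conjI)
  show "invertible_mat P"
    unfolding invertible_mat_def inverts_mat_def using P Q PQ QP by (auto intro!: exI[of _ Q])
  have "P * (Q * M * Q\<^sup>T) * P\<^sup>T = M" if "M \<in> S" for M
  proof -
    have M: "M \<in> carrier_mat n n" using S that by blast
    have "P * (Q * M * Q\<^sup>T) * P\<^sup>T = (P * Q) * M * (P * Q)\<^sup>T"
      using P Q M by (simp add: transpose_mult[OF P Q] assoc_mult_mat[of _ n n _ n _ n])
    also have "\<dots> = M" using PQ M by simp
    finally show ?thesis .
  qed
  then show "S = (\<lambda>M. P * M * P\<^sup>T) ` (\<lambda>M. Q * M * Q\<^sup>T) ` S"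
    by (force simp: image_image)
qed (use P in simp)

lemma index_upper_left [simp]:
  "i < n - 1 \<Longrightarrow> j < n - 1 \<Longrightarrow> upper_left n M $$ (i,j) = M $$ (i,j)"
  unfolding upper_left_def by simp

lemma upper_left_WA_block:
  assumes "upper_left n M \<in> WA (n - 1)" "0 < i" "i < n - 1" "0 < j" "j < n - 1"
  shows "M $$ (i,j) = 0"
proof -
  have "upper_left n M $$ (i,j) = 0" using assms unfolding WA_def by blast
  then show ?thesis using assms by simp
qed

lemma subspace_upper_left:
  fixes S :: "'a::field mat set"
  assumes "subspace class_ring S (module_mat TYPE('a) n n)"
  shows "subspace class_ring (upper_left n ` S) (module_mat TYPE('a) (n - 1) (n - 1))"
  by (rule subspace_mat_image[OF assms]) (auto simp: upper_left_def)

lemma upper_left_first_rows_not_proportional: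
  fixes S :: "'a::field mat set"
  assumes S: "subspace class_ring S (module_mat TYPE('a) n n)"
    and WA: "upper_left n ` S \<subseteq> WA (n - 1)"
    and dim: "vectorspace.dim class_ring
      ((module_mat TYPE('a) (n - 1) (n - 1))\<lparr>carrier := upper_left n ` S\<rparr>) > 1"
  obtains M N where "M \<in> S" "N \<in> S"
    "\<not> proportional_on {0<..<n-1} (\<lambda>k. M $$ (0,k)) (\<lambda>k. N $$ (0,k))"
proof -
  have "\<not> (\<forall>A\<in>upper_left n ` S. \<forall>B\<in>upper_left n ` S.
      proportional_on {0<..<n-1} (\<lambda>k. A $$ (0,k)) (\<lambda>k. B $$ (0,k)))"
    using dim_le_1_if_first_rows_proportional[OF subspace_upper_left[OF S] WA] dim by force
  then show ?thesis using that unfolding proportional_on_def by fastforce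
qed

lemma subspace_last_col_common_factor:
  fixes S :: "'a::field mat set"
  assumes S: "subspace class_ring S (module_mat TYPE('a) n n)"
    and proportional: "\<And>M. M \<in> S \<Longrightarrow>
      proportional_on {0<..<n-1} (\<lambda>k. M $$ (0,k)) (\<lambda>k. M $$ (k,n-1))"
    and MN: "M \<in> S" "N \<in> S" "\<not> proportional_on {0<..<n-1} (\<lambda>k. M $$ (0,k)) (\<lambda>k. N $$ (0,k))"
  shows "\<exists>l. \<forall>M\<in>S. \<forall>k\<in>{0<..<n-1}. M $$ (k,n-1) = l * M $$ (0,k)"
proof -
  have "proportional_on {0<..<n-1} (\<lambda>k. A $$ (0,k) + B $$ (0,k)) (\<lambda>k. A $$ (k,n-1) + B $$ (k,n-1))"
    if "A \<in> S" "B \<in> S" for A B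
  proof -
    have "B \<in> carrier_mat n n" using subspace_mat_closed(1)[OF S] that(2) by blast
    moreover have "proportional_on {0<..<n-1} (\<lambda>k. (A + B) $$ (0,k)) (\<lambda>k. (A + B) $$ (k,n-1))"
      using proportional subspace_mat_closed(2)[OF S that] .
    ultimately show ?thesis
      by (subst (asm) proportional_on_cong[where u' = "\<lambda>k. A $$ (0,k) + B $$ (0,k)"
            and v' = "\<lambda>k. A $$ (k,n-1) + B $$ (k,n-1)"]) auto
  qed
  then show ?thesis
    using proportional_on_common_factor[where a = "\<lambda>M k. M $$ (0,k)" and b = "\<lambda>M k. M $$ (k,n-1)",
      OF proportional _ MN] by blast
qed

lemma congruent_subspace_WA_if_last_col_multiple:
  fixes S :: "'a::field mat set"
  assumes S: "subspace class_ring S (module_mat TYPE('a) n n)" and alt: "S \<subseteq> alt_mat n"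
    and n: "2 \<le> n"
    and block: "\<And>M i j. M \<in> S \<Longrightarrow> 0 < i \<Longrightarrow> i < n - 1 \<Longrightarrow> 0 < j \<Longrightarrow> j < n - 1 \<Longrightarrow> M $$ (i,j) = 0"
    and last_col: "\<forall>M\<in>S. \<forall>k\<in>{0<..<n-1}. M $$ (k,n-1) = l * M $$ (0,k)"
  shows "\<exists>T. subspace class_ring T (module_mat TYPE('a) n n) \<and> T \<subseteq> WA n \<and> congruent_sets n S T"
proof (intro exI conjI)
  define Q where "Q = addrow_mat n l (n - 1) 0"
  have inverse: "addrow_mat n (- l) (n - 1) 0 * Q = 1\<^sub>m n" "Q * addrow_mat n (- l) (n - 1) 0 = 1\<^sub>m n"
    unfolding Q_def using addrow_mat_inv[of "n-1" n 0 "- l"] addrow_mat_inv[of "n-1" n 0 l] n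
    by auto
  show "subspace class_ring ((\<lambda>M. Q * M * Q\<^sup>T) ` S) (module_mat TYPE('a) n n)"
    using subspace_congruence_image[OF S] Q_def by simp
  show "(\<lambda>M. Q * M * Q\<^sup>T) ` S \<subseteq> WA n"
  proof (rule image_subsetI)
    fix M assume M: "M \<in> S"
    then have "M $$ (k,n-1) = l * M $$ (0,k)" if "0 < k" "k < n - 1" for k
      using last_col that by simp
    then show "Q * M * Q\<^sup>T \<in> WA n"
      unfolding Q_def using congruence_addrow_mat_WA[OF _ n block[OF M]] M alt by auto
  qed
  show "congruent_sets n S ((\<lambda>M. Q * M * Q\<^sup>T) ` S)"
    using congruent_sets_congruence_image[OF _ _ _ inverse] subspace_mat_closed(1)[OF S] Q_def
    by simp
qed

theorem lemma4p6:
  fixes S :: "'a::field mat set" and n :: nat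
  assumes "n \<ge> 3"
    and "subspace class_ring S (module_mat TYPE('a) n n)"
    and "S \<subseteq> alt_mat n"
    and "\<forall>M \<in> S. vec_space.rank n M \<le> 2"
    and "upper_left n ` S \<subseteq> WA (n - 1)"
    and "vectorspace.dim class_ring
           ((module_mat TYPE('a) (n - 1) (n - 1))\<lparr>carrier := upper_left n ` S\<rparr>) > 1"
  shows "\<exists>T. subspace class_ring T (module_mat TYPE('a) n n) \<and> T \<subseteq> WA n \<and>
             congruent_sets n S T"
proof -
  have block: "M $$ (i,j) = 0" if "M \<in> S" "0 < i" "i < n - 1" "0 < j" "j < n - 1" for M i j
    using upper_left_WA_block assms(5) that by blast
  have "proportional_on {0<..<n-1} (\<lambda>k. M $$ (0,k)) (\<lambda>k. M $$ (k,n-1))" if "M \<in> S" for M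
    using alt_mat_rank_le_2_proportional[of M n] assms(3,4) block that by blast
  moreover obtain M N where "M \<in> S" "N \<in> S"
    "\<not> proportional_on {0<..<n-1} (\<lambda>k. M $$ (0,k)) (\<lambda>k. N $$ (0,k))"
    using upper_left_first_rows_not_proportional[OF assms(2,5,6)] .
  ultimately obtain l where l: "\<forall>M\<in>S. \<forall>k\<in>{0<..<n-1}. M $$ (k,n-1) = l * M $$ (0,k)"
    using subspace_last_col_common_factor[OF assms(2)] by blast
  show ?thesis
    by (rule congruent_subspace_WA_if_last_col_multiple[OF assms(2,3) _ block l]) (use assms(1) in simp)
qed

end
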